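(* For every integer $k\ge 2$, the user partition multicast rate of the $(k,2)$-GIC problem (defined in the context) satisfies $\beta_{UPM}\le k$.
   Context: GIC problem: there are $m$ packets $x_1,\dots,x_m$; for each $i\in[m]$ there is a nonempty set $U_i=\{u_i^1,\dots,u_i^{|U_i|}\}$ of users demanding $x_i$, $U=\bigcup_i U_i$; user $u_i^j$ knows the packets $x_{i'}$, $i'\in A_i^j$, where $A_i^j\subseteq[m]\setminus\{i\}$. UPM rate: for a partition of $U$ into nonempty disjoint sets $W_1,\dots,W_h$ ($1\le h\le m$), let $Y_e=\{i: u_i^j\in W_e\text{ for some } j\}$ and $c_e=\min\{|A_i^j\cap Y_e|: u_i^j\in W_e\}$; $\beta_{UPM}$ is the minimum over all such partitions of $\sum_{e=1}^h(|Y_e|-c_e)$. The $(k,2)$-GIC problem: $m=k(k-1)/2$ packets, each packet $x_i$ demanded by exactly two users $U_i=\{u_i^1,u_i^2\}$. For $l\in[k]$ define $I_l^1=\{(l-1)k+a-\tfrac{l(l-1)}{2} : a=1,\dots,k-l\}$ for $l\ne k$, $I_k^1=\emptyset$; $I_l^2=\{(a-1)k+l-\tfrac{a(a+1)}{2} : a=1,\dots,l-1\}$ for $l\ne1$, $I_1^2=\emptyset$; $I_l=I_l^1\cup I_l^2$. The side information of user $u_i^j$ ($j\in\{1,2\}$) is $A_i^j=I_l\setminus\{i\}$ where $l$ is the index with $i\in I_l^j$. *)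

theory Defs
  imports Main
begin

(* General GIC problem: packets 1..m; a user is a pair (i,j) meaning u_i^j, which
   demands packet i; the set of all users is U; A i j is the side information of u_i^j. *)

definition is_user_partition :: "(nat \<times> nat) set \<Rightarrow> nat \<Rightarrow> (nat \<times> nat) set set \<Rightarrow> bool" where
  "is_user_partition U m P \<longleftrightarrow>
     finite P \<and> (\<forall>W\<in>P. W \<noteq> {}) \<and> \<Union>P = U \<and>
     (\<forall>W1\<in>P. \<forall>W2\<in>P. W1 \<noteq> W2 \<longrightarrow> W1 \<inter> W2 = {}) \<and>
     1 \<le> card P \<and> card P \<le> m"

definition block_packets :: "(nat \<times> nat) set \<Rightarrow> nat set" where
  "block_packets W = fst ` W"

definition block_c :: "(nat \<Rightarrow> nat \<Rightarrow> nat set) \<Rightarrow> (nat \<times> nat) set \<Rightarrow> nat" where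
  "block_c A W = Min ((\<lambda>(i,j). card (A i j \<inter> block_packets W)) ` W)"

definition upm_cost :: "(nat \<Rightarrow> nat \<Rightarrow> nat set) \<Rightarrow> (nat \<times> nat) set set \<Rightarrow> nat" where
  "upm_cost A P = (\<Sum>W\<in>P. card (block_packets W) - block_c A W)"

definition beta_UPM :: "(nat \<times> nat) set \<Rightarrow> nat \<Rightarrow> (nat \<Rightarrow> nat \<Rightarrow> nat set) \<Rightarrow> nat" where
  "beta_UPM U m A = Min (upm_cost A ` {P. is_user_partition U m P})"

definition k2_m :: "nat \<Rightarrow> nat" where
  "k2_m k = k * (k - 1) div 2"

definition k2_users :: "nat \<Rightarrow> (nat \<times> nat) set" where
  "k2_users k = {(i, j). i \<in> {1..k2_m k} \<and> j \<in> {1, 2}}"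

definition I1 :: "nat \<Rightarrow> nat \<Rightarrow> nat set" where
  "I1 k l = (if l = k then {} else
      {(l - 1) * k + a - l * (l - 1) div 2 | a. 1 \<le> a \<and> a \<le> k - l})"

definition I2 :: "nat \<Rightarrow> nat \<Rightarrow> nat set" where
  "I2 k l = (if l = 1 then {} else
      {(a - 1) * k + l - a * (a + 1) div 2 | a. 1 \<le> a \<and> a \<le> l - 1})"

definition Iset :: "nat \<Rightarrow> nat \<Rightarrow> nat set" where
  "Iset k l = I1 k l \<union> I2 k l"

definition Ij :: "nat \<Rightarrow> nat \<Rightarrow> nat \<Rightarrow> nat set" where
  "Ij k j l = (if j = 1 then I1 k l else I2 k l)"

definition k2_side :: "nat \<Rightarrow> nat \<Rightarrow> nat \<Rightarrow> nat set" where
  "k2_side k i j = Iset k (THE l. l \<in> {1..k} \<and> i \<in> Ij k j l) - {i}"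

end

theory Submission
  imports Defs
begin

(* Number the packets by the pairs a < b in [k], in lexicographic order (pair_packet below).
   Then I_l^1 and I_l^2 consist of the packets whose pair has first, resp. second, coordinate l,
   so every user u_i^j lies in I_l^j for exactly one l, and I_l is the set of packets whose
   pair contains l. Grouping the users by this l, every user of a group knows all packets of
   the group except its own, so one transmission (the sum of the group's packets) serves the
   whole group, and there are k groups. *)

lemma beta_UPM_le_upm_cost:
  assumes "finite U" "is_user_partition U m P"
  shows "beta_UPM U m A \<le> upm_cost A P"
proof -
  have "{P. is_user_partition U m P} \<subseteq> Pow (Pow U)"
    by (auto simp: is_user_partition_def)
  then have "finite {P. is_user_partition U m P}"
    using assms(1) by (meson finite_Pow_iff finite_subset)
  then show ?thesis unfolding beta_UPM_def using assms(2) by (intro Min_le) auto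
qed

lemma block_cost_le_one:
  assumes "finite W" "W \<noteq> {}"
    and knows: "\<And>i j. (i, j) \<in> W \<Longrightarrow> block_packets W - {i} \<subseteq> A i j"
  shows "card (block_packets W) - block_c A W \<le> 1"
proof -
  let ?Y = "block_packets W"
  have "card ?Y - 1 \<le> card (A i j \<inter> ?Y)" if "(i, j) \<in> W" for i j
  proof -
    have "card ?Y - 1 \<le> card (?Y - {i})"
      using assms(1) by (simp add: block_packets_def card_Diff_singleton_if)
    also have "\<dots> \<le> card (A i j \<inter> ?Y)"
      using knows[OF that] assms(1) by (intro card_mono) (auto simp: block_packets_def)
    finally show ?thesis .
  qed
  then have "card ?Y - 1 \<le> block_c A W"
    using assms(1,2) by (auto simp: block_c_def)
  then show ?thesis by simp
qed

lemma is_user_partition_fibres: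
  assumes "finite U" "U \<noteq> {}" "card (lab ` U) \<le> m"
  shows "is_user_partition U m ((\<lambda>l. {u \<in> U. lab u = l}) ` lab ` U)"
    (is "is_user_partition U m ?P")
proof -
  have "card ?P \<le> m"
    using card_image_le[of "lab ` U"] assms(1,3) by (meson finite_imageI le_trans)
  moreover have "?P \<noteq> {}" using assms(2) by simp
  ultimately show ?thesis
    using assms(1) by (auto simp: is_user_partition_def Suc_le_eq card_gt_0_iff)
qed

lemma beta_UPM_le_card_labels:
  assumes "finite U" "U \<noteq> {}" "lab ` U \<subseteq> L" "finite L" "card L \<le> m"
    and knows: "\<And>i j i' j'. (i, j) \<in> U \<Longrightarrow> (i', j') \<in> U \<Longrightarrow> lab (i, j) = lab (i', j') \<Longrightarrow>
      i' \<noteq> i \<Longrightarrow> i' \<in> A i j"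
  shows "beta_UPM U m A \<le> card L"
proof -
  define P where "P = (\<lambda>l. {u \<in> U. lab u = l}) ` lab ` U"
  have card_labels: "card (lab ` U) \<le> card L" using assms(3,4) by (rule card_mono[rotated])
  have "is_user_partition U m P"
    unfolding P_def using assms(1,2,5) card_labels by (intro is_user_partition_fibres) simp_all
  then have "beta_UPM U m A \<le> upm_cost A P"
    by (rule beta_UPM_le_upm_cost[OF assms(1)])
  also have "\<dots> \<le> (\<Sum>W\<in>P. 1)"
    unfolding upm_cost_def
  proof (rule sum_mono, rule block_cost_le_one)
    fix W assume "W \<in> P"
    then obtain l where W: "W = {u \<in> U. lab u = l}" "W \<noteq> {}" by (auto simp: P_def)
    then show "finite W" "W \<noteq> {}" using assms(1) by simp_all
    fix i j assume ij: "(i, j) \<in> W"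
    show "block_packets W - {i} \<subseteq> A i j"
    proof
      fix i' assume "i' \<in> block_packets W - {i}"
      then obtain j' where "(i', j') \<in> W" "i' \<noteq> i" by (auto simp: block_packets_def)
      then show "i' \<in> A i j" using ij W(1) knows[of i j i' j'] by simp
    qed
  qed
  also have "\<dots> \<le> card L"
    using card_image_le[of "lab ` U" "\<lambda>l. {u \<in> U. lab u = l}"] assms(1) card_labels
    by (simp add: P_def)
  finally show ?thesis .
qed

definition pair_offset :: "nat \<Rightarrow> nat \<Rightarrow> nat" where
  "pair_offset k a = (a - 1) * k - a * (a - 1) div 2"

definition pair_packet :: "nat \<Rightarrow> nat \<Rightarrow> nat \<Rightarrow> nat" where
  "pair_packet k a b = pair_offset k a + (b - a)"

lemma triangle_le: "a \<le> k \<Longrightarrow> a * (a - 1) div 2 \<le> (a - 1) * (k::nat)"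
  by (metis div_le_dividend le_trans mult.commute mult_le_mono1)

lemma pair_offset_Suc:
  assumes "1 \<le> a" "a \<le> k"
  shows "pair_offset k (Suc a) = pair_offset k a + (k - a)"
proof -
  have "Suc a * a div 2 = a * (a - 1) div 2 + a"
    using assms(1) by (cases a) (simp_all add: algebra_simps)
  moreover have "a * k = (a - 1) * k + k"
    using assms(1) by (cases a) simp_all
  ultimately show ?thesis
    using triangle_le[OF assms(2)] assms(2) by (simp add: pair_offset_def)
qed

lemma pair_offset_self: "pair_offset k k = k2_m k"
proof -
  have "even (k * (k - 1))" by (cases "even k") simp_all
  then have "(k - 1) * k = 2 * (k * (k - 1) div 2)" by (simp add: mult.commute)
  then show ?thesis by (simp add: pair_offset_def k2_m_def)
qed

lemma pair_offset_gap:
  assumes "1 \<le> a" "a < a'" "a' \<le> k"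
  shows "pair_offset k a + (k - a) \<le> pair_offset k a'"
proof -
  from assms(2) have "Suc a \<le> a'" by simp
  then show ?thesis using assms(3)
  proof (induction a' rule: dec_induct)
    case base
    then show ?case using assms(1) pair_offset_Suc[of a k] by simp
  next
    case (step n)
    then show ?case using assms(1) pair_offset_Suc[of n k] by simp
  qed
qed

lemma pair_packet_inj:
  assumes "1 \<le> a" "a < b" "b \<le> k" "1 \<le> a'" "a' < b'" "b' \<le> k"
    and "pair_packet k a b = pair_packet k a' b'"
  shows "a = a' \<and> b = b'"
proof -
  have False if "a < a'" "1 \<le> a" "a < b" "b \<le> k" "a' < b'" "b' \<le> k"
    "pair_packet k a b = pair_packet k a' b'" for a b a' b'
    using that pair_offset_gap[of a a' k] by (simp add: pair_packet_def)
  then have "a = a'" using assms by (metis linorder_neqE_nat order_le_less_trans)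
  then show ?thesis using assms by (simp add: pair_packet_def)
qed

lemma pair_packet_surj:
  assumes "1 \<le> i" "i \<le> pair_offset k l" "l \<le> k"
  shows "\<exists>a b. 1 \<le> a \<and> a < b \<and> b \<le> k \<and> i = pair_packet k a b"
  using assms(2,3)
proof (induction l)
  case 0
  then show ?case using assms(1) by (simp add: pair_offset_def)
next
  case (Suc l)
  show ?case
  proof (cases "l = 0 \<or> i \<le> pair_offset k l")
    case True
    then show ?thesis using Suc assms(1) by (auto simp: pair_offset_def)
  next
    case False
    define c where "c = i - pair_offset k l"
    have "1 \<le> c" "l + c \<le> k" "i = pair_packet k l (l + c)"
      using False Suc.prems pair_offset_Suc[of l k] by (auto simp: c_def pair_packet_def)
    then show ?thesis using False by (intro exI[of _ l] exI[of _ "l + c"]) simp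
  qed
qed

lemma I1_eq:
  assumes "a \<le> k"
  shows "I1 k a = pair_packet k a ` {a<..k}"
proof (cases "a = k")
  case False
  have "(a - 1) * k + c - a * (a - 1) div 2 = pair_packet k a (a + c)" for c
    using triangle_le[OF assms] by (simp add: pair_packet_def pair_offset_def)
  then have "I1 k a = (\<lambda>c. pair_packet k a (a + c)) ` {0<..k - a}"
    using False by (auto simp: I1_def)
  also have "\<dots> = pair_packet k a ` ((+) a ` {0<..k - a})"
    by (simp only: image_image)
  also have "\<dots> = pair_packet k a ` {a<..k}"
    using assms by simp
  finally show ?thesis .
qed (simp add: I1_def)

lemma I2_eq:
  assumes "b \<le> k"
  shows "I2 k b = (\<lambda>a. pair_packet k a b) ` {1..<b}"
proof -
  have "(a - 1) * k + b - a * (a + 1) div 2 = pair_packet k a b" if "1 \<le> a" "a < b" for a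
  proof -
    have "a * (a + 1) div 2 = a * (a - 1) div 2 + a"
      using that(1) by (cases a) (simp_all add: algebra_simps)
    then show ?thesis
      using triangle_le[of a k] that assms by (simp add: pair_packet_def pair_offset_def)
  qed
  then show ?thesis by (force simp: I2_def)
qed

lemma Ij_index_unique:
  assumes "i \<in> {1..k2_m k}"
  shows "\<exists>!l. l \<in> {1..k} \<and> i \<in> Ij k j l"
proof -
  obtain a b where ab: "1 \<le> a" "a < b" "b \<le> k" "i = pair_packet k a b"
    using pair_packet_surj[of i k k] assms by (auto simp: pair_offset_self)
  have pair_unique: "a' = a \<and> b' = b"
    if "1 \<le> a'" "a' < b'" "b' \<le> k" "i = pair_packet k a' b'" for a' b'
    using pair_packet_inj[of a' b' k a b] that ab by simp
  show ?thesis
  proof (cases "j = 1")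
    case True
    then have Ij: "i \<in> Ij k j l \<longleftrightarrow> (\<exists>b'. l < b' \<and> b' \<le> k \<and> i = pair_packet k l b')"
      if "l \<le> k" for l
      using I1_eq[OF that] by (auto simp: Ij_def)
    show ?thesis
    proof (rule ex1I[of _ a])
      show "a \<in> {1..k} \<and> i \<in> Ij k j a" using ab Ij[of a] by auto
      fix l assume "l \<in> {1..k} \<and> i \<in> Ij k j l"
      then show "l = a" using Ij[of l] pair_unique[of l] by fastforce
    qed
  next
    case False
    then have Ij: "i \<in> Ij k j l \<longleftrightarrow> (\<exists>a'. 1 \<le> a' \<and> a' < l \<and> i = pair_packet k a' l)"
      if "l \<le> k" for l
      using I2_eq[OF that] by (auto simp: Ij_def)
    show ?thesis
    proof (rule ex1I[of _ b])
      show "b \<in> {1..k} \<and> i \<in> Ij k j b" using ab Ij[of b] by auto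
      fix l assume "l \<in> {1..k} \<and> i \<in> Ij k j l"
      then show "l = b" using Ij[of l] pair_unique[of _ l] by fastforce
    qed
  qed
qed

definition k2_group :: "nat \<Rightarrow> nat \<times> nat \<Rightarrow> nat" where
  "k2_group k u = (THE l. l \<in> {1..k} \<and> fst u \<in> Ij k (snd u) l)"

lemma k2_side_eq: "k2_side k i j = Iset k (k2_group k (i, j)) - {i}"
  by (simp add: k2_side_def k2_group_def)

lemma k2_group_mem:
  assumes "(i, j) \<in> k2_users k"
  shows "k2_group k (i, j) \<in> {1..k}" and "i \<in> Iset k (k2_group k (i, j))"
proof -
  have "i \<in> {1..k2_m k}" using assms by (simp add: k2_users_def)
  from theI'[OF Ij_index_unique[OF this, of j]]
  show "k2_group k (i, j) \<in> {1..k}" "i \<in> Iset k (k2_group k (i, j))"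
    by (auto simp: k2_group_def Iset_def Ij_def split: if_splits)
qed

lemma finite_k2_users: "finite (k2_users k)"
proof (rule finite_subset)
  show "k2_users k \<subseteq> {1..k2_m k} \<times> {1, 2}" by (auto simp: k2_users_def)
qed simp

theorem proposition3:
  fixes k :: nat
  assumes "k \<ge> 2"
  shows "beta_UPM (k2_users k) (k2_m k) (k2_side k) \<le> k"
proof (cases "k = 2")
  case True
  \<comment> \<open>Only one block is allowed here, as m = 1; grouping by l would need two.\<close>
  then have one_packet: "k2_m k = 1" by (simp add: k2_m_def)
  have "beta_UPM (k2_users k) (k2_m k) (k2_side k) \<le> card {0::nat}"
    by (rule beta_UPM_le_card_labels[where lab = "\<lambda>_. 0"])
      (use one_packet finite_k2_users in \<open>auto simp: k2_users_def\<close>)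
  then show ?thesis using assms by simp
next
  case False
  then have "k * 2 \<le> k * (k - 1)" using assms by simp
  then have many_packets: "k \<le> k2_m k"
    using div_le_mono[of "k * 2" "k * (k - 1)" 2] by (simp add: k2_m_def)
  have "beta_UPM (k2_users k) (k2_m k) (k2_side k) \<le> card {1..k}"
  proof (rule beta_UPM_le_card_labels[where lab = "k2_group k"])
    show "k2_users k \<noteq> {}" "k2_group k ` k2_users k \<subseteq> {1..k}" "card {1..k} \<le> k2_m k"
      using many_packets assms k2_group_mem(1) by (auto simp: k2_users_def)
    show "i' \<in> k2_side k i j"
      if "(i', j') \<in> k2_users k" "k2_group k (i, j) = k2_group k (i', j')" "i' \<noteq> i"
      for i j i' j'
      using that k2_group_mem(2)[of i' j' k] by (simp add: k2_side_eq)
  qed (simp_all add: finite_k2_users)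
  then show ?thesis by simp
qed

end
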